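(* Let $n=p_1^{\alpha_1}p_2^{\alpha_2}p_3^{\alpha_3}$ where $p_1,p_2,p_3$ are distinct primes and $\alpha_i\geq 1$ are integers, and suppose $\alpha_i>1$ for at least two indices $i\in\{1,2,3\}$. Then $\mathbb{AG}(\mathbb{Z}_n)$ is not perfect.
   Context: For a commutative ring $R$ with unity, the annihilating-ideal graph $\mathbb{AG}(R)$ is the simple graph whose vertex set is the set of all non-zero ideals of $R$ with non-zero annihilator, two distinct vertices $I,J$ being adjacent if and only if $IJ=0$. A graph $G$ is perfect if $\omega(H)=\chi(H)$ for every induced subgraph $H$ of $G$. *)

theory Defs
  imports "HOL-Algebra.Ideal_Product" "HOL-Number_Theory.Residues"
begin

text \<open>A simple graph is given by a vertex set V and a symmetric irreflexive adjacency
  relation E (only its restriction to V matters).  Induced subgraph on H is (H, E).\<close>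

definition is_clique :: "'v set \<Rightarrow> ('v \<Rightarrow> 'v \<Rightarrow> bool) \<Rightarrow> 'v set \<Rightarrow> bool" where
  "is_clique V E C \<longleftrightarrow> C \<subseteq> V \<and> (\<forall>x\<in>C. \<forall>y\<in>C. x \<noteq> y \<longrightarrow> E x y)"

definition clique_number :: "'v set \<Rightarrow> ('v \<Rightarrow> 'v \<Rightarrow> bool) \<Rightarrow> nat" where
  "clique_number V E = Max {card C | C. is_clique V E C}"

definition is_colouring :: "'v set \<Rightarrow> ('v \<Rightarrow> 'v \<Rightarrow> bool) \<Rightarrow> nat \<Rightarrow> ('v \<Rightarrow> nat) \<Rightarrow> bool" where
  "is_colouring V E k f \<longleftrightarrow> (\<forall>x\<in>V. f x < k) \<and> (\<forall>x\<in>V. \<forall>y\<in>V. x \<noteq> y \<longrightarrow> E x y \<longrightarrow> f x \<noteq> f y)"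

definition chromatic_number :: "'v set \<Rightarrow> ('v \<Rightarrow> 'v \<Rightarrow> bool) \<Rightarrow> nat" where
  "chromatic_number V E = (LEAST k. \<exists>f. is_colouring V E k f)"

definition perfect_graph :: "'v set \<Rightarrow> ('v \<Rightarrow> 'v \<Rightarrow> bool) \<Rightarrow> bool" where
  "perfect_graph V E \<longleftrightarrow> (\<forall>H\<subseteq>V. clique_number H E = chromatic_number H E)"

definition ann_ideal :: "('a, 'b) ring_scheme \<Rightarrow> 'a set \<Rightarrow> 'a set" where
  "ann_ideal R I = {x \<in> carrier R. \<forall>i\<in>I. x \<otimes>\<^bsub>R\<^esub> i = \<zero>\<^bsub>R\<^esub>}"

definition AG_vertices :: "('a, 'b) ring_scheme \<Rightarrow> 'a set set" where
  "AG_vertices R = {I. ideal I R \<and> I \<noteq> {\<zero>\<^bsub>R\<^esub>} \<and> ann_ideal R I \<noteq> {\<zero>\<^bsub>R\<^esub>}}"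

definition AG_adj :: "('a, 'b) ring_scheme \<Rightarrow> 'a set \<Rightarrow> 'a set \<Rightarrow> bool" where
  "AG_adj R I J \<longleftrightarrow> I \<noteq> J \<and> ideal_prod R I J = {\<zero>\<^bsub>R\<^esub>}"

end

(* Write n = p^a q^b r^c with a, b >= 2 and c >= 1; the case split in the theorem only decides
   which two primes carry the large exponents.  For proper divisors d, e > 1 of n the ideal dZ_n is a
   vertex of AG(Z_n), and dZ_n, eZ_n are adjacent iff d <> e and n divides de.  Comparing exponents,
   the generators q^b r^c, p^a r^c, p q^b, p^(a-1) q r^c, p^a q^(b-1) form an induced 5-cycle in this
   order.  An odd hole has clique number 2 and chromatic number 3, so AG(Z_n) is not perfect. *)

theory Submission
  imports Defs "HOL-Library.Product_Order" "HOL-Library.Product_Plus"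
begin

lemma clique_number_le:
  assumes "\<And>C. is_clique V E C \<Longrightarrow> card C \<le> k"
  shows "clique_number V E \<le> k"
proof -
  have "{card C | C. is_clique V E C} \<subseteq> {..k}" using assms by auto
  moreover have "is_clique V E {}"
    by (simp add: is_clique_def)
  ultimately show ?thesis
    unfolding clique_number_def by (intro Max.boundedI) (auto intro: finite_subset)
qed

lemma chromatic_number_ge:
  assumes "finite V" and "\<And>k f. is_colouring V E k f \<Longrightarrow> m \<le> k"
  shows "m \<le> chromatic_number V E"
proof -
  obtain f :: "'a \<Rightarrow> nat" and k where img: "f ` V = {i. i < k}" and "inj_on f V"
    using finite_imp_inj_to_nat_seg[OF \<open>finite V\<close>] by blast
  have "f x < k" if "x \<in> V" for x
    using img that by (metis imageI mem_Collect_eq)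
  moreover have "f x \<noteq> f y" if "x \<in> V" "y \<in> V" "x \<noteq> y" for x y
    using \<open>inj_on f V\<close> that by (meson inj_onD)
  ultimately have "is_colouring V E k f"
    unfolding is_colouring_def by blast
  then have "\<exists>f. is_colouring V E (chromatic_number V E) f"
    unfolding chromatic_number_def using LeastI_ex[of "\<lambda>k. \<exists>f. is_colouring V E k f"] by blast
  then show ?thesis using assms(2) by blast
qed

lemma less_5_cases: "i < (5::nat) \<Longrightarrow> i \<in> {0, 1, 2, 3, 4}"
  by auto

definition C5_adjacent :: "nat \<Rightarrow> nat \<Rightarrow> bool" where
  "C5_adjacent i j \<longleftrightarrow> j = (i + 1) mod 5 \<or> i = (j + 1) mod 5"

lemma C5_triangle_free:
  assumes "i < 5" "j < 5" "k < 5" "i \<noteq> j" "i \<noteq> k" "j \<noteq> k"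
    and "C5_adjacent i j" "C5_adjacent i k" "C5_adjacent j k"
  shows False
  using less_5_cases[OF assms(1)] less_5_cases[OF assms(2)] less_5_cases[OF assms(3)] assms(4-)
  unfolding C5_adjacent_def by (elim insertE emptyE; simp)

lemma three_elements_of_card:
  assumes "2 < card C"
  obtains x y z where "x \<in> C" "y \<in> C" "z \<in> C" "x \<noteq> y" "x \<noteq> z" "y \<noteq> z"
proof -
  have "Suc (Suc (Suc 0)) \<le> card C" using assms by simp
  then show ?thesis using that unfolding card_le_Suc_iff by blast
qed

lemma C5_clique_number:
  fixes v :: "nat \<Rightarrow> 'v"
  assumes "\<And>i j. i < 5 \<Longrightarrow> j < 5 \<Longrightarrow> E (v i) (v j) \<longleftrightarrow> C5_adjacent i j"
  shows "clique_number (v ` {..<5}) E \<le> 2"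
proof (rule clique_number_le, rule ccontr)
  fix C assume C: "is_clique (v ` {..<5}) E C" and "\<not> card C \<le> 2"
  then have "2 < card C" by simp
  then obtain x y z where xyz: "x \<in> C" "y \<in> C" "z \<in> C" "x \<noteq> y" "x \<noteq> z" "y \<noteq> z"
    by (rule three_elements_of_card)
  have "C \<subseteq> v ` {..<5}" using C by (simp add: is_clique_def)
  with xyz obtain i j k where ijk: "i < 5" "j < 5" "k < 5" "x = v i" "y = v j" "z = v k"
    by (meson imageE lessThan_iff subsetD)
  have "E x y" "E x z" "E y z" using C xyz by (simp_all add: is_clique_def)
  with ijk have adjacent: "C5_adjacent i j" "C5_adjacent i k" "C5_adjacent j k"
    using assms by simp_all
  have distinct: "i \<noteq> j" "i \<noteq> k" "j \<noteq> k" using xyz ijk by auto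
  from ijk(1-3) distinct adjacent show False by (rule C5_triangle_free)
qed

lemma C5_chromatic_number:
  fixes v :: "nat \<Rightarrow> 'v"
  assumes "inj_on v {..<5}"
    and "\<And>i j. i < 5 \<Longrightarrow> j < 5 \<Longrightarrow> E (v i) (v j) \<longleftrightarrow> C5_adjacent i j"
  shows "3 \<le> chromatic_number (v ` {..<5}) E"
proof (rule chromatic_number_ge, simp, rule ccontr)
  fix k f assume f: "is_colouring (v ` {..<5}) E k f" and "\<not> 3 \<le> k"
  have bound: "f (v i) < 2" if "i < 5" for i
  proof -
    have "f (v i) < k" using f that unfolding is_colouring_def by simp
    with \<open>\<not> 3 \<le> k\<close> show ?thesis by linarith
  qed
  have differ: "f (v i) \<noteq> f (v j)" if "i < 5" "j = (i + 1) mod 5" for i j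
  proof -
    have "i \<noteq> j"
      using less_5_cases[OF \<open>i < 5\<close>] \<open>j = (i + 1) mod 5\<close> by (elim insertE emptyE; simp)
    then have "v i \<noteq> v j"
      by (rule inj_on_contraD[OF assms(1)]) (simp_all add: that)
    moreover have "E (v i) (v j)" using that assms(2) by (simp add: C5_adjacent_def)
    ultimately show ?thesis
      using f that unfolding is_colouring_def by simp
  qed
  have "f (v 0) \<noteq> f (v 1)" "f (v 1) \<noteq> f (v 2)" "f (v 2) \<noteq> f (v 3)"
    "f (v 3) \<noteq> f (v 4)" "f (v 4) \<noteq> f (v 0)"
    by (rule differ; simp)+
  moreover have "f (v 0) < 2" "f (v 1) < 2" "f (v 2) < 2" "f (v 3) < 2" "f (v 4) < 2"
    by (rule bound; simp)+
  ultimately show False by linarith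
qed

lemma induced_C5_not_perfect:
  fixes v :: "nat \<Rightarrow> 'v"
  assumes "v ` {..<5} \<subseteq> V" and "inj_on v {..<5}"
    and "\<And>i j. i < 5 \<Longrightarrow> j < 5 \<Longrightarrow> E (v i) (v j) \<longleftrightarrow> C5_adjacent i j"
  shows "\<not> perfect_graph V E"
proof
  assume "perfect_graph V E"
  then have "clique_number (v ` {..<5}) E = chromatic_number (v ` {..<5}) E"
    using assms(1) unfolding perfect_graph_def by blast
  with C5_clique_number[where v = v and E = E, OF assms(3)]
    C5_chromatic_number[where v = v and E = E, OF assms(2,3)]
  show False by linarith
qed

definition residue_multiples :: "int \<Rightarrow> int \<Rightarrow> int set" where
  "residue_multiples m d = {x \<in> {0..m - 1}. d dvd x}"

lemma residue_multiples_eq_PIdl: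
  assumes "1 < m" "0 < d" "d dvd m"
  shows "residue_multiples m d = PIdl\<^bsub>residue_ring m\<^esub> d"
proof
  show "residue_multiples m d \<subseteq> PIdl\<^bsub>residue_ring m\<^esub> d"
  proof
    fix x assume x: "x \<in> residue_multiples m d"
    then obtain k where k: "x = k * d"
      unfolding residue_multiples_def by (metis (mono_tags) dvdE mem_Collect_eq mult.commute)
    with x \<open>0 < d\<close> have "0 \<le> k"
      unfolding residue_multiples_def
      by (metis mem_Collect_eq atLeastAtMost_iff linorder_not_le mult_neg_pos)
    moreover from this k \<open>0 < d\<close> have "k \<le> x" by (simp add: mult_le_cancel_left1)
    ultimately have "k \<in> carrier (residue_ring m)" "x = k \<otimes>\<^bsub>residue_ring m\<^esub> d"
      using x k unfolding residue_multiples_def residue_ring_def by auto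
    then show "x \<in> PIdl\<^bsub>residue_ring m\<^esub> d"
      unfolding cgenideal_def by blast
  qed
next
  show "PIdl\<^bsub>residue_ring m\<^esub> d \<subseteq> residue_multiples m d"
    using assms unfolding residue_multiples_def cgenideal_def residue_ring_def
    by (auto simp: dvd_mod)
qed

lemma residue_multiples_ideal:
  assumes "0 < d" "d < m" "d dvd m"
  shows "ideal (residue_multiples m d) (residue_ring m)"
proof -
  have "cring (residue_ring m)"
    using assms residues.cring unfolding residues_def by simp
  moreover have "d \<in> carrier (residue_ring m)"
    using assms unfolding residue_ring_def by simp
  ultimately show ?thesis
    using assms residue_multiples_eq_PIdl cring.cgenideal_ideal by fastforce
qed

lemma self_in_residue_multiples: "0 < d \<Longrightarrow> d < m \<Longrightarrow> d \<in> residue_multiples m d"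
  unfolding residue_multiples_def by simp

lemma residue_multiples_in_AG_vertices:
  assumes "1 < d" "d < m" "d dvd m"
  shows "residue_multiples m d \<in> AG_vertices (residue_ring m)"
proof -
  obtain k where k: "m = d * k" using \<open>d dvd m\<close> by blast
  with assms have "0 < k" "k < m"
    by (auto simp: zero_less_mult_iff)
  have "k \<in> ann_ideal (residue_ring m) (residue_multiples m d)"
    using \<open>0 < k\<close> \<open>k < m\<close> k
    by (auto simp: ann_ideal_def residue_multiples_def residue_ring_def mult.left_commute)
  moreover have "d \<in> residue_multiples m d"
    using assms by (simp add: self_in_residue_multiples)
  ultimately show ?thesis
    using assms \<open>0 < k\<close> residue_multiples_ideal
    unfolding AG_vertices_def by (auto simp: residue_ring_def)
qed

lemma residue_multiples_eq_iff:
  assumes "0 < d" "d < m" "0 < e" "e < m"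
  shows "residue_multiples m d = residue_multiples m e \<longleftrightarrow> d = e"
proof
  assume eq: "residue_multiples m d = residue_multiples m e"
  have "d \<in> residue_multiples m e" "e \<in> residue_multiples m d"
    using self_in_residue_multiples assms eq by blast+
  then have "e dvd d" "d dvd e" by (simp_all add: residue_multiples_def)
  with assms show "d = e" by (simp add: zdvd_antisym_nonneg)
qed simp

lemma ideal_prod_residue_multiples_eq_zero_iff:
  assumes "0 < d" "d < m" "0 < e" "e < m"
  shows "ideal_prod (residue_ring m) (residue_multiples m d) (residue_multiples m e) = {0}
    \<longleftrightarrow> m dvd d * e"
proof
  assume "ideal_prod (residue_ring m) (residue_multiples m d) (residue_multiples m e) = {0}"
  moreover have "d \<otimes>\<^bsub>residue_ring m\<^esub> e
      \<in> ideal_prod (residue_ring m) (residue_multiples m d) (residue_multiples m e)"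
    using assms by (intro ideal_prod.prod self_in_residue_multiples)
  ultimately show "m dvd d * e" by (auto simp: residue_ring_def)
next
  assume "m dvd d * e"
  have "s = 0" if "s \<in> ideal_prod (residue_ring m) (residue_multiples m d) (residue_multiples m e)" for s
    using that
  proof (induction s rule: ideal_prod.induct)
    case (prod i j)
    then have "d * e dvd i * j" by (auto simp: residue_multiples_def intro: mult_dvd_mono)
    with \<open>m dvd d * e\<close> show ?case by (auto simp: residue_ring_def intro: dvd_trans)
  qed (simp add: residue_ring_def)
  moreover have "0 \<otimes>\<^bsub>residue_ring m\<^esub> 0
      \<in> ideal_prod (residue_ring m) (residue_multiples m d) (residue_multiples m e)"
    using assms by (intro ideal_prod.prod) (auto simp: residue_multiples_def)
  ultimately show "ideal_prod (residue_ring m) (residue_multiples m d) (residue_multiples m e) = {0}"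
    by (auto simp: residue_ring_def)
qed

lemma AG_adj_residue_multiples_iff:
  assumes "0 < d" "d < m" "0 < e" "e < m"
  shows "AG_adj (residue_ring m) (residue_multiples m d) (residue_multiples m e)
    \<longleftrightarrow> d \<noteq> e \<and> m dvd d * e"
  using assms residue_multiples_eq_iff ideal_prod_residue_multiples_eq_zero_iff
  unfolding AG_adj_def by (simp add: residue_ring_def)

lemma prime_power_le_of_dvd:
  fixes s :: nat
  assumes "prime s" "coprime s w" "s ^ x * w' dvd s ^ a * w"
  shows "x \<le> a"
proof -
  have "s ^ x dvd s ^ a"
    using assms(2,3) by (metis coprime_dvd_mult_left_iff coprime_power_left_iff dvd_mult_left)
  then show ?thesis
    using assms(1) by (simp add: dvd_power_iff_le prime_ge_2_nat)
qed

locale three_primes =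
  fixes p q r :: nat
  assumes primes: "prime p" "prime q" "prime r"
    and distinct_primes: "p \<noteq> q" "p \<noteq> r" "q \<noteq> r"
begin

text \<open>Exponent triples are ordered and added componentwise, as in \<^theory>\<open>HOL-Library.Product_Order\<close>
  and \<^theory>\<open>HOL-Library.Product_Plus\<close>.\<close>

definition ppower :: "nat \<times> nat \<times> nat \<Rightarrow> nat" where
  "ppower = (\<lambda>(x, y, z). p ^ x * q ^ y * r ^ z)"

lemma ppower_pos: "0 < ppower u"
  using primes by (auto simp: ppower_def prime_gt_0_nat split: prod.split)

lemma ppower_zero: "ppower 0 = 1"
  by (simp add: ppower_def zero_prod_def)

lemma ppower_add: "ppower (u + v) = ppower u * ppower v"
  by (auto simp: ppower_def power_add ac_simps split: prod.split)

lemma ppower_dvd_iff: "ppower u dvd ppower v \<longleftrightarrow> u \<le> v"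
proof
  obtain x y z x' y' z' where uv: "u = (x, y, z)" "v = (x', y', z')"
    by (cases u, cases v) auto
  have rearrange: "ppower (i, j, k) = p ^ i * (q ^ j * r ^ k)"
    "ppower (i, j, k) = q ^ j * (p ^ i * r ^ k)" "ppower (i, j, k) = r ^ k * (p ^ i * q ^ j)" for i j k
    by (simp_all add: ppower_def ac_simps)
  have "coprime p (q ^ y' * r ^ z')" "coprime q (p ^ x' * r ^ z')" "coprime r (p ^ x' * q ^ y')"
    using primes distinct_primes by (simp_all add: primes_coprime coprime_commute)
  moreover assume "ppower u dvd ppower v"
  ultimately have "x \<le> x'" "y \<le> y'" "z \<le> z'"
    using primes unfolding uv by (metis prime_power_le_of_dvd rearrange)+
  then show "u \<le> v" unfolding uv by simp
next
  assume "u \<le> v"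
  then show "ppower u dvd ppower v"
    by (auto simp: ppower_def intro!: mult_dvd_mono le_imp_power_dvd split: prod.split)
qed

lemma ppower_eq_iff: "ppower u = ppower v \<longleftrightarrow> u = v"
  by (metis dvd_antisym order.antisym order.refl ppower_dvd_iff)

lemma ppower_less: "u < v \<Longrightarrow> ppower u < ppower v"
  by (metis dvd_imp_le order_less_le ppower_dvd_iff ppower_eq_iff ppower_pos)

lemma residue_multiples_ppower_in_AG_vertices:
  assumes "0 < u" "u < e"
  shows "residue_multiples (int (ppower e)) (int (ppower u))
    \<in> AG_vertices (residue_ring (int (ppower e)))"
  using assms ppower_less[of 0 u] ppower_less[of u e] ppower_dvd_iff[of u e]
  by (intro residue_multiples_in_AG_vertices) (auto simp: ppower_zero order_less_imp_le)

lemma AG_adj_residue_multiples_ppower_iff: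
  assumes "u < e" "v < e"
  shows "AG_adj (residue_ring (int (ppower e)))
      (residue_multiples (int (ppower e)) (int (ppower u)))
      (residue_multiples (int (ppower e)) (int (ppower v)))
    \<longleftrightarrow> u \<noteq> v \<and> e \<le> u + v"
proof -
  have "int (ppower e) dvd int (ppower u) * int (ppower v) \<longleftrightarrow> e \<le> u + v"
    by (metis of_nat_dvd_iff of_nat_mult ppower_add ppower_dvd_iff)
  then show ?thesis
    using assms ppower_less ppower_pos ppower_eq_iff
    by (subst AG_adj_residue_multiples_iff) auto
qed

lemma residue_multiples_ppower_eq_iff:
  assumes "u < e" "v < e"
  shows "residue_multiples (int (ppower e)) (int (ppower u))
      = residue_multiples (int (ppower e)) (int (ppower v)) \<longleftrightarrow> u = v"
  using assms ppower_less ppower_pos ppower_eq_iff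
  by (subst residue_multiples_eq_iff) auto

lemma AG_residue_ring_ppower_not_perfect:
  assumes "2 \<le> a" "2 \<le> b" "1 \<le> c"
  shows "\<not> perfect_graph (AG_vertices (residue_ring (int (ppower (a, b, c)))))
      (AG_adj (residue_ring (int (ppower (a, b, c)))))"
proof -
  define w where "w i = [(0, b, c), (a, 0, c), (1, b, 0), (a - 1, 1, c), (a, b - 1, 0)] ! i" for i
  have w_bounds: "0 < w i \<and> w i < (a, b, c)" if "i < 5" for i
    using less_5_cases[OF that] assms
    by (elim insertE emptyE) (auto simp: w_def less_prod_def zero_prod_def)
  have w_inj: "inj_on w {..<5}"
  proof (rule inj_onI)
    fix i j assume "i \<in> {..<5}" "j \<in> {..<5}" "w i = w j"
    then have "i \<in> {0, 1, 2, 3, 4}" "j \<in> {0, 1, 2, 3, 4}" by (meson lessThan_iff less_5_cases)+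
    with \<open>w i = w j\<close> assms show "i = j" by (elim insertE emptyE; simp add: w_def)
  qed
  have w_adj: "w i \<noteq> w j \<and> (a, b, c) \<le> w i + w j \<longleftrightarrow> C5_adjacent i j"
    if "i < 5" "j < 5" for i j
    using less_5_cases[OF that(1)] less_5_cases[OF that(2)] assms
    by (elim insertE emptyE; simp add: w_def C5_adjacent_def)
  define v where "v i = residue_multiples (int (ppower (a, b, c))) (int (ppower (w i)))" for i
  show ?thesis
  proof (rule induced_C5_not_perfect[where v = v])
    show "v ` {..<5} \<subseteq> AG_vertices (residue_ring (int (ppower (a, b, c))))"
      using w_bounds by (auto simp: v_def intro!: residue_multiples_ppower_in_AG_vertices)
    show "inj_on v {..<5}"
      using w_inj w_bounds residue_multiples_ppower_eq_iff by (auto simp: inj_on_def v_def)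
    show "AG_adj (residue_ring (int (ppower (a, b, c)))) (v i) (v j) \<longleftrightarrow> C5_adjacent i j"
      if "i < 5" "j < 5" for i j
      using that w_bounds w_adj AG_adj_residue_multiples_ppower_iff by (simp add: v_def)
  qed
qed

end

lemma AG_residue_ring_three_primes_not_perfect:
  assumes "prime p" "prime q" "prime r" "p \<noteq> q" "p \<noteq> r" "q \<noteq> r"
    and "2 \<le> a" "2 \<le> b" "1 \<le> c" "n = p ^ a * q ^ b * r ^ c"
  shows "\<not> perfect_graph (AG_vertices (residue_ring (int n))) (AG_adj (residue_ring (int n)))"
proof -
  interpret three_primes p q r
    using assms by unfold_locales
  have "n = ppower (a, b, c)"
    using assms by (simp add: ppower_def)
  then show ?thesis
    using AG_residue_ring_ppower_not_perfect assms by simp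
qed

theorem lemma3:
  fixes p1 p2 p3 a1 a2 a3 n :: nat
  assumes "prime p1" "prime p2" "prime p3"
    and "p1 \<noteq> p2" "p1 \<noteq> p3" "p2 \<noteq> p3"
    and "a1 \<ge> 1" "a2 \<ge> 1" "a3 \<ge> 1"
    and "(a1 > 1 \<and> a2 > 1) \<or> (a1 > 1 \<and> a3 > 1) \<or> (a2 > 1 \<and> a3 > 1)"
    and "n = p1 ^ a1 * p2 ^ a2 * p3 ^ a3"
  shows "\<not> perfect_graph (AG_vertices (residue_ring (int n))) (AG_adj (residue_ring (int n)))"
proof -
  consider "a1 > 1" "a2 > 1" | "a1 > 1" "a3 > 1" | "a2 > 1" "a3 > 1"
    using assms(10) by blast
  then show ?thesis
  proof cases
    case 1
    then show ?thesis
      using assms by (intro AG_residue_ring_three_primes_not_perfect[of p1 p2 p3 a1 a2 a3]) auto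
  next
    case 2
    then show ?thesis
      using assms by (intro AG_residue_ring_three_primes_not_perfect[of p1 p3 p2 a1 a3 a2])
        (auto simp: ac_simps)
  next
    case 3
    then show ?thesis
      using assms by (intro AG_residue_ring_three_primes_not_perfect[of p2 p3 p1 a2 a3 a1])
        (auto simp: ac_simps)
  qed
qed

end
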